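(* Let $k\ge1$, let $\Gamma\subset\mathbb{R}_+^k$ be a nonempty compact set, and let $(b_n)_{n\ge1}$ be a sequence of functions in $\mathcal{B}_\Gamma$. Then there exists a subsequence $(b_{n'})$ that converges pointwise on $\mathbb{R}^k$ to a limit function $b$, i.e., $\lim_{n'\to\infty}b_{n'}(x)=b(x)$ for every $x\in\mathbb{R}^k$, and this function $b$ belongs to $\mathcal{B}_\Gamma$.
   Context: $\mathcal{B}_\Gamma$ denotes the set of all convex functions $b:\mathbb{R}^k\to\mathbb{R}$ with $b(\mathbf{0})=0$ such that for every $x\in\mathbb{R}^k$ the subdifferential $\partial b(x)=\{g\in\mathbb{R}^k: b(y)-b(x)\ge g\cdot(y-x)\ \forall y\in\mathbb{R}^k\}$ satisfies $\partial b(x)\cap\Gamma\neq\emptyset$. *)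

theory Defs
  imports "HOL-Analysis.Analysis"
begin

definition subdiff :: "(real ^ 'k \<Rightarrow> real) \<Rightarrow> real ^ 'k \<Rightarrow> (real ^ 'k) set" where
  "subdiff b x = {g. \<forall>y. b y - b x \<ge> g \<bullet> (y - x)}"

definition B_Gamma :: "(real ^ 'k) set \<Rightarrow> (real ^ 'k \<Rightarrow> real) set" where
  "B_Gamma \<Gamma> = {b. convex_on UNIV b \<and> b 0 = 0 \<and> (\<forall>x. subdiff b x \<inter> \<Gamma> \<noteq> {})}"

definition nonneg_orthant :: "(real ^ 'k) set" where
  "nonneg_orthant = {x. \<forall>i. 0 \<le> x $ i}"

end

theory Submission
  imports Defs "HOL-Complex_Analysis.Great_Picard"
begin

text \<open>Every function in \<open>B_Gamma \<Gamma>\<close> is \<open>M\<close>-Lipschitz, where \<open>M\<close> bounds the norms of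
  the points of \<open>\<Gamma>\<close>, and vanishes at the origin. A diagonal argument on a countable dense set
  (as in the Arzel\<agrave>--Ascoli theorem) therefore yields a subsequence converging pointwise
  everywhere. Convexity and \<open>b 0 = 0\<close> pass to pointwise limits; for the subgradient condition,
  pick subgradients in \<open>\<Gamma>\<close> at a fixed point, extract a convergent subsequence by compactness,
  and pass to the limit in the subgradient inequality.\<close>

lemma pointwise_bounded_convergent_subsequence:
  fixes f :: "nat \<Rightarrow> 'a \<Rightarrow> 'b::{real_normed_vector,heine_borel}"
  assumes "countable S" and bound: "\<And>n x. x \<in> S \<Longrightarrow> norm (f n x) \<le> B x"
  obtains r where "strict_mono r" "\<And>x. x \<in> S \<Longrightarrow> convergent (\<lambda>n. f (r n) x)"
proof -
  define c where "c x = 1 + \<bar>B x\<bar>" for x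
  have c: "c x > 0" for x
    by (simp add: c_def add_pos_nonneg)
  have "norm (f n x /\<^sub>R c x) \<le> 1" if "x \<in> S" for n x
    using bound[OF that, of n] c[of x] by (simp add: c_def field_simps)
  then obtain r where r: "strict_mono r"
    and lim: "\<And>x. x \<in> S \<Longrightarrow> \<exists>l. (\<lambda>n. f (r n) x /\<^sub>R c x) \<longlonglongrightarrow> l"
    using function_convergent_subsequence[OF \<open>countable S\<close>, of "\<lambda>n x. f n x /\<^sub>R c x" 1] by blast
  have "convergent (\<lambda>n. f (r n) x)" if x: "x \<in> S" for x
  proof -
    obtain l where "(\<lambda>n. f (r n) x /\<^sub>R c x) \<longlonglongrightarrow> l"
      using lim[OF x] by blast
    then have "(\<lambda>n. c x *\<^sub>R (f (r n) x /\<^sub>R c x)) \<longlonglongrightarrow> c x *\<^sub>R l"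
      by (intro tendsto_scaleR tendsto_const)
    then show ?thesis
      using c[of x] unfolding convergent_def by auto
  qed
  with r show thesis
    using that by blast
qed

lemma lipschitz_convergent_from_dense:
  fixes f :: "nat \<Rightarrow> 'a::metric_space \<Rightarrow> 'b::complete_space"
  assumes lip: "\<And>n. L-lipschitz_on UNIV (f n)" and dense: "UNIV \<subseteq> closure S"
    and conv: "\<And>x. x \<in> S \<Longrightarrow> convergent (\<lambda>n. f n x)"
  shows "convergent (\<lambda>n. f n x)"
proof -
  have "L \<ge> 0"
    using lip lipschitz_on_nonneg by blast
  have "Cauchy (\<lambda>n. f n x)"
  proof (rule metric_CauchyI)
    fix e :: real
    assume "e > 0"
    then have "e / (3 * (L + 1)) > 0"
      using \<open>L \<ge> 0\<close> by simp
    then obtain d where "d \<in> S" and d: "dist d x < e / (3 * (L + 1))"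
      using dense closure_approachable[of x S] by blast
    have "L * dist d x \<le> (L + 1) * dist d x"
      by (simp add: distrib_right)
    also have "\<dots> < e / 3"
      using d \<open>L \<ge> 0\<close> by (simp add: field_simps)
    finally have near: "dist (f n x) (f n d) < e / 3" for n
      using lipschitz_onD[OF lip, of x d n] by (simp add: dist_commute)
    have "Cauchy (\<lambda>n. f n d)"
      using conv[OF \<open>d \<in> S\<close>] convergent_Cauchy by blast
    then obtain N where N: "\<And>m n. m \<ge> N \<Longrightarrow> n \<ge> N \<Longrightarrow> dist (f m d) (f n d) < e / 3"
      using \<open>e > 0\<close> unfolding Cauchy_def by (meson divide_pos_pos zero_less_numeral)
    have "dist (f m x) (f n x) < e" if "m \<ge> N" "n \<ge> N" for m n
      using dist_triangle[of "f m x" "f n x" "f m d"] dist_triangle[of "f m d" "f n x" "f n d"]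
        near[of m] near[of n] dist_commute[of "f n d" "f n x"] N[OF that] by linarith
    then show "\<exists>N. \<forall>m\<ge>N. \<forall>n\<ge>N. dist (f m x) (f n x) < e"
      by blast
  qed
  then show ?thesis
    using Cauchy_convergent_iff by blast
qed

lemma lipschitz_pointwise_convergent_subsequence:
  fixes f :: "nat \<Rightarrow> 'a::{metric_space,second_countable_topology} \<Rightarrow> 'b::{real_normed_vector,heine_borel}"
  assumes lip: "\<And>n. L-lipschitz_on UNIV (f n)" and "bounded (range (\<lambda>n. f n a))"
  obtains r where "strict_mono r" "\<And>x. convergent (\<lambda>n. f (r n) x)"
proof -
  obtain T :: "'a set" where "countable T" and dense: "UNIV \<subseteq> closure T"
    by (metis separable)
  obtain C where C: "\<And>n. norm (f n a) \<le> C"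
    using \<open>bounded (range (\<lambda>n. f n a))\<close> unfolding bounded_iff by blast
  have "norm (f n x) \<le> C + L * dist x a" for n x
    using norm_triangle_sub[of "f n x" "f n a"] lipschitz_onD[OF lip, of x a n] C[of n]
    by (simp add: dist_norm)
  then obtain r where r: "strict_mono r" and conv: "\<And>x. x \<in> T \<Longrightarrow> convergent (\<lambda>n. f (r n) x)"
    using pointwise_bounded_convergent_subsequence[OF \<open>countable T\<close>, of f "\<lambda>x. C + L * dist x a"]
    by blast
  have "convergent (\<lambda>n. f (r n) x)" for x
    using lipschitz_convergent_from_dense[of L "\<lambda>n. f (r n)", OF lip dense conv] .
  with r show thesis
    using that by blast
qed

lemma B_Gamma_lipschitz:
  fixes b :: "real ^ 'k \<Rightarrow> real"
  assumes b: "b \<in> B_Gamma \<Gamma>" and M: "\<And>g. g \<in> \<Gamma> \<Longrightarrow> norm g \<le> M"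
  shows "M-lipschitz_on UNIV b"
proof -
  have upper: "b x - b y \<le> M * dist x y" for x y
  proof -
    obtain g where g: "g \<in> subdiff b x" "g \<in> \<Gamma>"
      using b unfolding B_Gamma_def by blast
    have "g \<bullet> (y - x) \<le> b y - b x"
      using g(1) unfolding subdiff_def by blast
    then have "b x - b y \<le> g \<bullet> (x - y)"
      by (simp add: inner_diff_right)
    also have "\<dots> \<le> norm g * norm (x - y)"
      by (rule norm_cauchy_schwarz)
    also have "\<dots> \<le> M * dist x y"
      using M[OF g(2)] by (simp add: dist_norm mult_right_mono)
    finally show ?thesis .
  qed
  obtain g where "g \<in> \<Gamma>"
    using b unfolding B_Gamma_def by blast
  then have "M \<ge> 0"
    using M norm_ge_zero order_trans by blast
  show ?thesis
  proof (rule lipschitz_onI)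
    show "dist (b x) (b y) \<le> M * dist x y" for x y
      using upper[of x y] upper[of y x] by (simp add: dist_real_def dist_commute abs_le_iff)
  qed fact
qed

lemma convex_on_LIMSEQ:
  assumes cvx: "\<And>n. convex_on S (f n)" and lim: "\<And>x. x \<in> S \<Longrightarrow> (\<lambda>n. f n x) \<longlonglongrightarrow> g x"
  shows "convex_on S g"
proof (rule convex_onI)
  show "convex S"
    using cvx unfolding convex_on_def by blast
  fix t :: real and x y
  assume "t > 0" "t < 1" "x \<in> S" "y \<in> S"
  then have "(1 - t) *\<^sub>R x + t *\<^sub>R y \<in> S"
    using \<open>convex S\<close> by (simp add: convex_alt)
  then show "g ((1 - t) *\<^sub>R x + t *\<^sub>R y) \<le> (1 - t) * g x + t * g y"
  proof (rule LIMSEQ_le[OF lim])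
    show "(\<lambda>n. (1 - t) * f n x + t * f n y) \<longlonglongrightarrow> (1 - t) * g x + t * g y"
      using \<open>x \<in> S\<close> \<open>y \<in> S\<close> by (intro tendsto_intros lim)
    show "\<exists>N. \<forall>n\<ge>N. f n ((1 - t) *\<^sub>R x + t *\<^sub>R y) \<le> (1 - t) * f n x + t * f n y"
      using \<open>t > 0\<close> \<open>t < 1\<close> \<open>x \<in> S\<close> \<open>y \<in> S\<close> convex_onD[OF cvx] by simp
  qed
qed

lemma subdiff_LIMSEQ:
  assumes "\<And>n. G n \<in> subdiff (f n) x" and "G \<longlonglongrightarrow> g" and lim: "\<And>y. (\<lambda>n. f n y) \<longlonglongrightarrow> h y"
  shows "g \<in> subdiff h x"
proof -
  have "g \<bullet> (y - x) \<le> h y - h x" for y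
  proof (rule LIMSEQ_le)
    show "(\<lambda>n. G n \<bullet> (y - x)) \<longlonglongrightarrow> g \<bullet> (y - x)"
      using \<open>G \<longlonglongrightarrow> g\<close> by (intro tendsto_intros)
    show "(\<lambda>n. f n y - f n x) \<longlonglongrightarrow> h y - h x"
      by (intro tendsto_intros lim)
    show "\<exists>N. \<forall>n\<ge>N. G n \<bullet> (y - x) \<le> f n y - f n x"
      using assms(1) unfolding subdiff_def by blast
  qed
  then show ?thesis
    unfolding subdiff_def by blast
qed

lemma B_Gamma_LIMSEQ:
  assumes "compact \<Gamma>" and B: "\<And>n. f n \<in> B_Gamma \<Gamma>" and lim: "\<And>x. (\<lambda>n. f n x) \<longlonglongrightarrow> b x"
  shows "b \<in> B_Gamma \<Gamma>"
proof -
  have "convex_on UNIV b"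
    using B unfolding B_Gamma_def by (intro convex_on_LIMSEQ[OF _ lim]) blast
  moreover have "b 0 = 0"
  proof -
    have "(\<lambda>n. f n 0) = (\<lambda>n. 0)"
      using B unfolding B_Gamma_def by blast
    then show ?thesis
      using lim[of 0] LIMSEQ_unique[OF _ tendsto_const] by metis
  qed
  moreover have "subdiff b x \<inter> \<Gamma> \<noteq> {}" for x
  proof -
    have "\<exists>g. g \<in> subdiff (f n) x \<inter> \<Gamma>" for n
      using B unfolding B_Gamma_def by blast
    then obtain G where G: "\<And>n. G n \<in> subdiff (f n) x \<inter> \<Gamma>"
      by metis
    then obtain g s where "g \<in> \<Gamma>" "strict_mono s" "(G \<circ> s) \<longlonglongrightarrow> g"
      using compact_imp_seq_compact[OF \<open>compact \<Gamma>\<close>] unfolding seq_compact_def by blast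
    moreover have "g \<in> subdiff b x"
    proof (rule subdiff_LIMSEQ)
      show "(G \<circ> s) n \<in> subdiff (f (s n)) x" for n
        using G by simp
      show "(\<lambda>n. f (s n) y) \<longlonglongrightarrow> b y" for y
        using LIMSEQ_subseq_LIMSEQ[OF lim \<open>strict_mono s\<close>] by (simp add: o_def)
    qed fact
    ultimately show ?thesis
      by blast
  qed
  ultimately show ?thesis
    unfolding B_Gamma_def by blast
qed

theorem proposition3:
  fixes \<Gamma> :: "(real ^ 'k) set" and bs :: "nat \<Rightarrow> real ^ 'k \<Rightarrow> real"
  assumes "\<Gamma> \<subseteq> nonneg_orthant" and "\<Gamma> \<noteq> {}" and "compact \<Gamma>"
    and "\<And>n. bs n \<in> B_Gamma \<Gamma>"
  shows "\<exists>r b. strict_mono r \<and> (\<forall>x. (\<lambda>n. bs (r n) x) \<longlonglongrightarrow> b x) \<and> b \<in> B_Gamma \<Gamma>"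
proof -
  obtain M where "\<And>g. g \<in> \<Gamma> \<Longrightarrow> norm g \<le> M"
    using compact_imp_bounded[OF \<open>compact \<Gamma>\<close>] by (auto simp: bounded_iff)
  then have lip: "M-lipschitz_on UNIV (bs n)" for n
    using B_Gamma_lipschitz assms(4) by blast
  have "bounded (range (\<lambda>n. bs n 0))"
    using assms(4) unfolding B_Gamma_def by simp
  then obtain r where "strict_mono r" and conv: "\<And>x. convergent (\<lambda>n. bs (r n) x)"
    using lipschitz_pointwise_convergent_subsequence[where f = bs, OF lip] by blast
  define b where "b x = lim (\<lambda>n. bs (r n) x)" for x
  have lim: "(\<lambda>n. bs (r n) x) \<longlonglongrightarrow> b x" for x
    unfolding b_def using conv convergent_LIMSEQ_iff by blast
  have "b \<in> B_Gamma \<Gamma>"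
    using B_Gamma_LIMSEQ[OF \<open>compact \<Gamma>\<close> assms(4) lim] .
  with \<open>strict_mono r\<close> lim show ?thesis
    by blast
qed

end
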